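(* Suppose $b=0$ and $\alpha(a\alpha+b\beta)\neq0$, i.e. $\alpha\neq0$ and $a\neq0$. Then the only control set of $\Sigma$ is the whole group $G$.
   Context: Let $G=\{(x,y)\in\mathbb{R}^2:x>0\}$. Fix $\Omega=[u_*,u^*]$ with $u_*<0<u^*$. The admissible controls $\mathcal U$ are the piecewise constant functions $\mathbb{R}\to\Omega$. The system is $\Sigma$: $\dot x=u\alpha x$, $\dot y=a(x-1)+by+ux\beta$, with $(a,b),(\alpha,\beta)\in\mathbb{R}^2\setminus\{(0,0)\}$. We write $\varphi(t,p,u)$ for its solutions and $\mathcal O^+(p)=\{\varphi(t,p,u):t\ge0,u\in\mathcal U\}$; closures are taken in $G$. A control set is a subset $\mathcal C\subset G$ that is maximal with respect to inclusion among the sets satisfying both of the following: (i) every $p\in\mathcal C$ admits $u\in\mathcal U$ with $\varphi(t,p,u)\in\mathcal C$ for all $t\ge0$; (ii) $\mathcal C\subset\operatorname{cl}\mathcal O^+(p)$ for all $p\in\mathcal C$. *)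

theory Defs
  imports "HOL-Analysis.Analysis"
begin

definition G :: "(real \<times> real) set" where
  "G = {p. fst p > 0}"

definition locfin :: "real set \<Rightarrow> bool" where
  "locfin S \<longleftrightarrow> (\<forall>T. finite (S \<inter> {-T..T}))"

text \<open>Admissible controls: piecewise constant functions R -> [umin, umax].
  Piecewise constant: outside a locally finite set of switching points the control
  is locally constant.\<close>
definition admissible :: "real \<Rightarrow> real \<Rightarrow> (real \<Rightarrow> real) \<Rightarrow> bool" where
  "admissible umin umax u \<longleftrightarrow>
     (\<forall>t. u t \<in> {umin..umax}) \<and>
     (\<exists>S. locfin S \<and> (\<forall>t. t \<notin> S \<longrightarrow> (\<exists>e>0. \<forall>s. \<bar>s - t\<bar> < e \<longrightarrow> u s = u t)))"

definition field :: "real \<Rightarrow> real \<Rightarrow> real \<Rightarrow> real \<Rightarrow> real \<times> real \<Rightarrow> real \<Rightarrow> real \<times> real" where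
  "field a b \<alpha> \<beta> p v = (v * \<alpha> * fst p, a * (fst p - 1) + b * snd p + v * fst p * \<beta>)"

text \<open>gamma is the solution t |-> phi(t,p,u) (t \<ge> 0) of Sigma starting at p under control u:
  continuous on [0,\<infinity>), gamma 0 = p, and satisfying the ODE at every positive time
  outside a locally finite set (the switching times of u).
  Since the system is affine in the state, such a solution exists and is unique.\<close>
definition is_solution :: "real \<Rightarrow> real \<Rightarrow> real \<Rightarrow> real \<Rightarrow> real \<times> real \<Rightarrow> (real \<Rightarrow> real)
                          \<Rightarrow> (real \<Rightarrow> real \<times> real) \<Rightarrow> bool" where
  "is_solution a b \<alpha> \<beta> p u \<gamma> \<longleftrightarrow>
     \<gamma> 0 = p \<and> continuous_on {0..} \<gamma> \<and>
     (\<exists>S. locfin S \<and> (\<forall>t>0. t \<notin> S \<longrightarrow>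
        (\<gamma> has_vector_derivative field a b \<alpha> \<beta> (\<gamma> t) (u t)) (at t)))"

definition orbit_pos :: "real \<Rightarrow> real \<Rightarrow> real \<Rightarrow> real \<Rightarrow> real \<Rightarrow> real \<Rightarrow> real \<times> real
                          \<Rightarrow> (real \<times> real) set" where
  "orbit_pos umin umax a b \<alpha> \<beta> p =
     {\<gamma> t | t u \<gamma>. t \<ge> 0 \<and> admissible umin umax u \<and> is_solution a b \<alpha> \<beta> p u \<gamma>}"

definition cs_pre :: "real \<Rightarrow> real \<Rightarrow> real \<Rightarrow> real \<Rightarrow> real \<Rightarrow> real \<Rightarrow> (real \<times> real) set \<Rightarrow> bool" where
  "cs_pre umin umax a b \<alpha> \<beta> C \<longleftrightarrow>
     C \<subseteq> G \<and>
     (\<forall>p\<in>C. \<exists>u \<gamma>. admissible umin umax u \<and> is_solution a b \<alpha> \<beta> p u \<gamma> \<and>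
                   (\<forall>t\<ge>0. \<gamma> t \<in> C)) \<and>
     (\<forall>p\<in>C. C \<subseteq> closure (orbit_pos umin umax a b \<alpha> \<beta> p) \<inter> G)"

definition control_set :: "real \<Rightarrow> real \<Rightarrow> real \<Rightarrow> real \<Rightarrow> real \<Rightarrow> real \<Rightarrow> (real \<times> real) set \<Rightarrow> bool" where
  "control_set umin umax a b \<alpha> \<beta> C \<longleftrightarrow>
     cs_pre umin umax a b \<alpha> \<beta> C \<and>
     (\<forall>D. cs_pre umin umax a b \<alpha> \<beta> D \<and> C \<subseteq> D \<longrightarrow> D = C)"

end

theory Submission
  imports Defs
begin

text \<open>
  G itself satisfies both defining conditions, and every set satisfying them lies in G, so G is
  the only control set. Invariance is clear, as the control 0 freezes x. For exact controllability,
  note that under a constant control the system is explicitly solvable: x can be steered from any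
  positive value to any other at a cost in y that does not depend on y, while with control 0 the
  state drifts vertically at speed a (x - 1). The drift has opposite signs at x = 2 and at
  x = 1/2, so waiting suitable times at these two abscissae absorbs any remaining error in y.
\<close>

lemma locfin_empty: "locfin {}"
  unfolding locfin_def by simp

lemma locfin_insert: "locfin S \<Longrightarrow> locfin (insert c S)"
  unfolding locfin_def by (simp add: Int_insert_left)

lemma locfin_Un: "locfin A \<Longrightarrow> locfin B \<Longrightarrow> locfin (A \<union> B)"
  unfolding locfin_def by (simp add: Int_Un_distrib2)

lemma locfin_translation:
  assumes "locfin S"
  shows "locfin ((+) c ` S)"
  unfolding locfin_def
proof
  fix T
  have "(+) c ` S \<inter> {-T..T} \<subseteq> (+) c ` (S \<inter> {-(T + \<bar>c\<bar>)..T + \<bar>c\<bar>})"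
    by (auto simp: image_iff abs_le_iff)
  moreover have "finite ((+) c ` (S \<inter> {-(T + \<bar>c\<bar>)..T + \<bar>c\<bar>}))"
    using assms unfolding locfin_def by blast
  ultimately show "finite ((+) c ` S \<inter> {-T..T})"
    by (rule finite_subset)
qed

lemma admissible_iff_eventually_const:
  "admissible umin umax u \<longleftrightarrow>
     (\<forall>t. u t \<in> {umin..umax}) \<and>
     (\<exists>S. locfin S \<and> (\<forall>t. t \<notin> S \<longrightarrow> (\<forall>\<^sub>F s in nhds t. u s = u t)))"
  unfolding admissible_def eventually_nhds_metric dist_real_def ..

lemma admissible_const: "v \<in> {umin..umax} \<Longrightarrow> admissible umin umax (\<lambda>_. v)"
  unfolding admissible_iff_eventually_const using locfin_empty by auto

lemma eventually_nhds_shift: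
  fixes T t :: real
  assumes "\<forall>\<^sub>F s in nhds (t - T). P s"
  shows "\<forall>\<^sub>F s in nhds t. P (s - T)"
proof -
  have "filterlim (\<lambda>s. s - T) (nhds (t - T)) (nhds t)"
    by (intro tendsto_diff filterlim_ident tendsto_const)
  then show ?thesis
    using assms by (simp add: filterlim_iff)
qed

lemma admissible_concat:
  assumes "admissible umin umax u1" "admissible umin umax u2"
  shows "admissible umin umax (\<lambda>t. if t < T then u1 t else u2 (t - T))"
proof -
  let ?u = "\<lambda>t. if t < T then u1 t else u2 (t - T)"
  obtain S1 where S1: "locfin S1" "\<And>t. t \<notin> S1 \<Longrightarrow> \<forall>\<^sub>F s in nhds t. u1 s = u1 t"
    using assms(1) unfolding admissible_iff_eventually_const by blast
  obtain S2 where S2: "locfin S2" "\<And>t. t \<notin> S2 \<Longrightarrow> \<forall>\<^sub>F s in nhds t. u2 s = u2 t"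
    using assms(2) unfolding admissible_iff_eventually_const by blast
  have "\<forall>\<^sub>F s in nhds t. ?u s = ?u t" if t: "t \<notin> insert T (S1 \<union> (+) T ` S2)" for t
  proof (cases "t < T")
    case True
    have "\<forall>\<^sub>F s in nhds t. s < T"
      using True by (rule eventually_nhds_in_open[of "{..<T}", simplified])
    moreover have "\<forall>\<^sub>F s in nhds t. u1 s = u1 t"
      using t S1(2) by simp
    ultimately show ?thesis
      by eventually_elim (simp add: True)
  next
    case False
    with t have "T < t" "t - T \<notin> S2"
      by (auto simp: image_iff)
    have "\<forall>\<^sub>F s in nhds t. T < s"
      using \<open>T < t\<close> by (rule eventually_nhds_in_open[of "{T<..}", simplified])
    moreover have "\<forall>\<^sub>F s in nhds t. u2 (s - T) = u2 (t - T)"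
      using eventually_nhds_shift[OF S2(2)] \<open>t - T \<notin> S2\<close> by simp
    ultimately show ?thesis
      by eventually_elim (use \<open>T < t\<close> in auto)
  qed
  moreover have "locfin (insert T (S1 \<union> (+) T ` S2))"
    using S1(1) S2(1) by (intro locfin_insert locfin_Un locfin_translation)
  moreover have "\<forall>t. ?u t \<in> {umin..umax}"
    using assms unfolding admissible_def by simp
  ultimately show ?thesis
    unfolding admissible_iff_eventually_const by blast
qed

lemma continuous_on_concat:
  fixes T :: real
  assumes "continuous_on {0..} g1" "continuous_on {0..} g2" "g2 0 = g1 T" "0 \<le> T"
  shows "continuous_on {0..} (\<lambda>t. if t \<le> T then g1 t else g2 (t - T))"
proof -
  let ?g = "\<lambda>t. if t \<le> T then g1 t else g2 (t - T)"
  have "continuous_on {0..T} ?g"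
    by (rule continuous_on_eq[of _ g1]) (auto intro: continuous_on_subset[OF assms(1)])
  moreover have "continuous_on {T..} ?g"
  proof (rule continuous_on_eq[of _ "g2 \<circ> (\<lambda>t. t - T)"])
    show "continuous_on {T..} (g2 \<circ> (\<lambda>t. t - T))"
      by (rule continuous_on_compose[OF _ continuous_on_subset[OF assms(2)]])
        (auto intro!: continuous_intros)
  qed (use assms(3) in auto)
  ultimately have "continuous_on ({0..T} \<union> {T..}) ?g"
    by (intro continuous_on_closed_Un) auto
  moreover have "{0..T} \<union> {T..} = {0..}"
    using assms(4) by auto
  ultimately show ?thesis
    by simp
qed

lemma has_vector_derivative_concat_left:
  fixes T t :: real
  assumes "(g1 has_vector_derivative f) (at t)" "t < T"
  shows "((\<lambda>s. if s \<le> T then g1 s else g2 (s - T)) has_vector_derivative f) (at t)"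
proof (rule has_vector_derivative_transform_within_open[OF assms(1), of "{..<T}"])
  show "t \<in> {..<T}"
    using assms(2) by simp
qed simp_all

lemma has_vector_derivative_concat_right:
  fixes T t :: real
  assumes "(g2 has_vector_derivative f) (at (t - T))" "T < t"
  shows "((\<lambda>s. if s \<le> T then g1 s else g2 (s - T)) has_vector_derivative f) (at t)"
proof (rule has_vector_derivative_transform_within_open[of "g2 \<circ> (\<lambda>s. s - T)" _ _ "{T<..}"])
  have "((\<lambda>s. s - T) has_vector_derivative 1) (at t)"
    using has_vector_derivative_diff[OF has_vector_derivative_id has_vector_derivative_const[of T]]
    by simp
  from vector_diff_chain_at[OF this] assms(1)
  show "((g2 \<circ> (\<lambda>s. s - T)) has_vector_derivative f) (at t)"
    by simp
  show "t \<in> {T<..}"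
    using assms(2) by simp
qed simp_all

lemma is_solution_concat:
  assumes "is_solution a b \<alpha> \<beta> p u1 g1" "0 \<le> T" "is_solution a b \<alpha> \<beta> (g1 T) u2 g2"
  shows "is_solution a b \<alpha> \<beta> p (\<lambda>t. if t < T then u1 t else u2 (t - T))
                                 (\<lambda>t. if t \<le> T then g1 t else g2 (t - T))"
proof -
  let ?u = "\<lambda>t. if t < T then u1 t else u2 (t - T)"
  let ?g = "\<lambda>t. if t \<le> T then g1 t else g2 (t - T)"
  obtain S1 where S1: "locfin S1"
    "\<And>t. 0 < t \<Longrightarrow> t \<notin> S1 \<Longrightarrow> (g1 has_vector_derivative field a b \<alpha> \<beta> (g1 t) (u1 t)) (at t)"
    using assms(1) unfolding is_solution_def by blast
  obtain S2 where S2: "locfin S2"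
    "\<And>t. 0 < t \<Longrightarrow> t \<notin> S2 \<Longrightarrow> (g2 has_vector_derivative field a b \<alpha> \<beta> (g2 t) (u2 t)) (at t)"
    using assms(3) unfolding is_solution_def by blast
  have "(?g has_vector_derivative field a b \<alpha> \<beta> (?g t) (?u t)) (at t)"
    if t: "0 < t" "t \<notin> insert T (S1 \<union> (+) T ` S2)" for t
  proof (cases "t < T")
    case True
    then show ?thesis
      using t S1(2) by (simp add: has_vector_derivative_concat_left)
  next
    case False
    with t have "T < t" "t - T \<notin> S2"
      by (auto simp: image_iff)
    then show ?thesis
      using S2(2)[of "t - T"] by (simp add: has_vector_derivative_concat_right)
  qed
  moreover have "locfin (insert T (S1 \<union> (+) T ` S2))"
    using S1(1) S2(1) by (intro locfin_insert locfin_Un locfin_translation)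
  moreover have "continuous_on {0..} ?g" "?g 0 = p"
    using assms continuous_on_concat[of g1 g2 T] unfolding is_solution_def by auto
  ultimately show ?thesis
    unfolding is_solution_def by blast
qed

lemma orbit_pos_trans:
  assumes "q \<in> orbit_pos umin umax a b \<alpha> \<beta> p" "r \<in> orbit_pos umin umax a b \<alpha> \<beta> q"
  shows "r \<in> orbit_pos umin umax a b \<alpha> \<beta> p"
proof -
  obtain t1 u1 g1 where 1: "0 \<le> t1" "admissible umin umax u1" "is_solution a b \<alpha> \<beta> p u1 g1" "q = g1 t1"
    using assms(1) unfolding orbit_pos_def by blast
  obtain t2 u2 g2 where 2: "0 \<le> t2" "admissible umin umax u2" "is_solution a b \<alpha> \<beta> q u2 g2" "r = g2 t2"
    using assms(2) unfolding orbit_pos_def by blast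
  let ?u = "\<lambda>t. if t < t1 then u1 t else u2 (t - t1)"
  let ?g = "\<lambda>t. if t \<le> t1 then g1 t else g2 (t - t1)"
  have "r = ?g (t1 + t2)"
    using 1(4) 2 unfolding is_solution_def by (cases "t2 = 0") auto
  moreover have "admissible umin umax ?u"
    using 1(2) 2(2) by (rule admissible_concat)
  moreover have "is_solution a b \<alpha> \<beta> p ?u ?g"
    using 1 2(3) by (intro is_solution_concat) auto
  moreover have "0 \<le> t1 + t2"
    using 1(1) 2(1) by simp
  ultimately show ?thesis
    unfolding orbit_pos_def by (intro CollectI exI[of _ "t1 + t2"] exI[of _ ?u] exI[of _ ?g]) simp
qed

definition exp_integral :: "real \<Rightarrow> real \<Rightarrow> real" where
  "exp_integral r s = (if r = 0 then s else (exp (r * s) - 1) / r)"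

lemma exp_integral_has_real_derivative: "(exp_integral r has_real_derivative exp (r * s)) (at s)"
proof (cases "r = 0")
  case True
  then have "exp_integral r = (\<lambda>s. s)"
    by (simp add: fun_eq_iff exp_integral_def)
  with True show ?thesis
    by (auto intro!: derivative_eq_intros)
next
  case False
  have "((\<lambda>s. (exp (r * s) - 1) / r) has_real_derivative exp (r * s) * r / r) (at s)"
    by (auto intro!: derivative_eq_intros)
  with False show ?thesis
    unfolding exp_integral_def by simp
qed

definition const_control_flow :: "real \<Rightarrow> real \<Rightarrow> real \<Rightarrow> real \<Rightarrow> real \<Rightarrow> real \<Rightarrow> real \<Rightarrow> real \<times> real" where
  "const_control_flow a \<alpha> \<beta> v x y s =
     (x * exp (v * \<alpha> * s),
      y + \<beta> / \<alpha> * x * (exp (v * \<alpha> * s) - 1) + a * (x * exp_integral (v * \<alpha>) s - s))"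

lemma const_control_flow_has_vector_derivative:
  assumes "\<alpha> \<noteq> 0"
  shows "(const_control_flow a \<alpha> \<beta> v x y has_vector_derivative
           field a 0 \<alpha> \<beta> (const_control_flow a \<alpha> \<beta> v x y s) v) (at s)"
proof -
  let ?e = "exp (v * \<alpha> * s)"
  have "((\<lambda>s. x * exp (v * \<alpha> * s)) has_real_derivative x * (?e * (v * \<alpha>))) (at s)"
    by (auto intro!: derivative_eq_intros)
  moreover have "((\<lambda>s. y + \<beta> / \<alpha> * x * (exp (v * \<alpha> * s) - 1) + a * (x * exp_integral (v * \<alpha>) s - s))
      has_real_derivative \<beta> / \<alpha> * x * (?e * (v * \<alpha>)) + a * (x * ?e - 1)) (at s)"
    by (auto intro!: derivative_eq_intros exp_integral_has_real_derivative)
  ultimately have "(const_control_flow a \<alpha> \<beta> v x y has_vector_derivative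
      (x * (?e * (v * \<alpha>)), \<beta> / \<alpha> * x * (?e * (v * \<alpha>)) + a * (x * ?e - 1))) (at s)"
    unfolding const_control_flow_def has_real_derivative_iff_has_vector_derivative
    by (rule has_vector_derivative_Pair)
  moreover have "field a 0 \<alpha> \<beta> (const_control_flow a \<alpha> \<beta> v x y s) v =
      (x * (?e * (v * \<alpha>)), \<beta> / \<alpha> * x * (?e * (v * \<alpha>)) + a * (x * ?e - 1))"
    using assms unfolding field_def const_control_flow_def by (simp add: field_simps)
  ultimately show ?thesis
    by simp
qed

lemma is_solution_const_control:
  assumes "\<alpha> \<noteq> 0"
  shows "is_solution a 0 \<alpha> \<beta> (x, y) (\<lambda>_. v) (const_control_flow a \<alpha> \<beta> v x y)"
proof -
  have "continuous_on {0..} (const_control_flow a \<alpha> \<beta> v x y)"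
    using const_control_flow_has_vector_derivative[OF assms] has_vector_derivative_continuous
    by (blast intro: continuous_at_imp_continuous_on)
  moreover have "const_control_flow a \<alpha> \<beta> v x y 0 = (x, y)"
    unfolding const_control_flow_def exp_integral_def by simp
  ultimately show ?thesis
    unfolding is_solution_def using locfin_empty const_control_flow_has_vector_derivative[OF assms]
    by blast
qed

lemma const_control_flow_in_orbit_pos:
  assumes "\<alpha> \<noteq> 0" "v \<in> {umin..umax}" "0 \<le> s"
  shows "const_control_flow a \<alpha> \<beta> v x y s \<in> orbit_pos umin umax a 0 \<alpha> \<beta> (x, y)"
  unfolding orbit_pos_def
  using assms is_solution_const_control[OF assms(1)] admissible_const[OF assms(2)] by blast

lemma const_control_flow_zero: "const_control_flow a \<alpha> \<beta> 0 x y s = (x, y + a * (x - 1) * s)"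
  unfolding const_control_flow_def exp_integral_def by (simp add: algebra_simps)

lemma const_control_flow_translate:
  "const_control_flow a \<alpha> \<beta> v x y s = const_control_flow a \<alpha> \<beta> v x 0 s + (0, y)"
  unfolding const_control_flow_def by simp

lemma orbit_pos_wait:
  assumes "\<alpha> \<noteq> 0" "umin \<le> 0" "0 \<le> umax" "0 \<le> s"
  shows "(x, y + a * (x - 1) * s) \<in> orbit_pos umin umax a 0 \<alpha> \<beta> (x, y)"
  using const_control_flow_in_orbit_pos[OF assms(1) _ assms(4), of 0 umin umax a \<beta> x y] assms(2,3)
  by (simp add: const_control_flow_zero)

lemma exists_control_reaching:
  fixes x x' :: real
  assumes "\<alpha> \<noteq> 0" "umin < 0" "0 < umax" "0 < x" "0 < x'"
  obtains v s where "v \<in> {umin..umax}" "0 \<le> s" "x * exp (v * \<alpha> * s) = x'"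
proof -
  define l where "l = ln (x' / x)"
  define v where "v = (if 0 \<le> l * \<alpha> then umax else umin)"
  have "v \<in> {umin..umax}" "v * \<alpha> \<noteq> 0"
    using assms(1-3) unfolding v_def by auto
  have "0 \<le> (v * \<alpha>) * l"
  proof (cases "0 \<le> l * \<alpha>")
    case True
    then have "0 \<le> umax * (l * \<alpha>)"
      using assms(3) by simp
    with True show ?thesis
      unfolding v_def by (simp add: mult.commute mult.left_commute)
  next
    case False
    then have "0 \<le> umin * (l * \<alpha>)"
      using assms(2) by (simp add: mult_nonpos_nonpos)
    with False show ?thesis
      unfolding v_def by (simp add: mult.commute mult.left_commute)
  qed
  then have "0 \<le> l / (v * \<alpha>)"
    using zero_le_divide_iff zero_le_mult_iff by auto
  moreover have "x * exp (v * \<alpha> * (l / (v * \<alpha>))) = x'"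
    using \<open>v * \<alpha> \<noteq> 0\<close> assms(4,5) unfolding l_def by simp
  ultimately show ?thesis
    using that \<open>v \<in> {umin..umax}\<close> by blast
qed

lemma orbit_pos_move:
  assumes "\<alpha> \<noteq> 0" "umin < 0" "0 < umax" "0 < x" "0 < x'"
  obtains d where "\<And>y. (x', y + d) \<in> orbit_pos umin umax a 0 \<alpha> \<beta> (x, y)"
proof -
  obtain v s where vs: "v \<in> {umin..umax}" "0 \<le> s" "x * exp (v * \<alpha> * s) = x'"
    using exists_control_reaching[OF assms] .
  have "(x', y + snd (const_control_flow a \<alpha> \<beta> v x 0 s)) \<in> orbit_pos umin umax a 0 \<alpha> \<beta> (x, y)" for y
    using const_control_flow_in_orbit_pos[OF assms(1) vs(1,2), of a \<beta> x y] vs(3)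
    unfolding const_control_flow_translate[of _ _ _ _ _ y] by (simp add: const_control_flow_def add.commute)
  then show ?thesis
    using that by blast
qed

lemma exists_nonneg_linear_combination:
  fixes p q r :: real
  assumes "p * q < 0"
  obtains s1 s2 where "0 \<le> s1" "0 \<le> s2" "p * s1 + q * s2 = r"
proof (cases "0 \<le> r * p")
  case True
  have "p \<noteq> 0"
    using assms by auto
  with True have "0 \<le> r / p" "p * (r / p) + q * 0 = r"
    by (auto simp: zero_le_mult_iff zero_le_divide_iff)
  then show ?thesis
    using that by blast
next
  case False
  then have "0 < r * q"
    using assms by (metis zero_less_mult_iff linorder_le_less_linear mult_less_0_iff order.asym)
  then have "0 \<le> r / q" "p * 0 + q * (r / q) = r"
    by (auto simp: zero_less_mult_iff zero_le_divide_iff)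
  then show ?thesis
    using that by blast
qed

lemma G_subset_orbit_pos:
  assumes "\<alpha> \<noteq> 0" "a \<noteq> 0" "umin < 0" "0 < umax" "0 < x0"
  shows "G \<subseteq> orbit_pos umin umax a 0 \<alpha> \<beta> (x0, y0)"
proof
  fix q assume "q \<in> G"
  then obtain x1 y1 where q: "q = (x1, y1)" "0 < x1"
    unfolding G_def by (cases q) auto
  let ?O = "orbit_pos umin umax a 0 \<alpha> \<beta>"
  obtain d1 where d1: "\<And>y. (2, y + d1) \<in> ?O (x0, y)"
    using orbit_pos_move[OF assms(1,3,4,5), of 2] by auto
  obtain d2 where d2: "\<And>y. (1/2, y + d2) \<in> ?O (2, y)"
    using orbit_pos_move[OF assms(1,3,4), of 2 "1/2"] by auto
  obtain d3 where d3: "\<And>y. (x1, y + d3) \<in> ?O (1/2, y)"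
    using orbit_pos_move[OF assms(1,3,4), of "1/2" x1] q(2) by auto
  have "(a * (2 - 1)) * (a * (1/2 - 1)) < 0"
    using assms(2) by (auto simp: mult_less_0_iff zero_less_mult_iff linorder_neq_iff)
  then obtain s1 s2 where s: "0 \<le> s1" "0 \<le> s2"
    "a * (2 - 1) * s1 + a * (1/2 - 1) * s2 = y1 - y0 - d1 - d2 - d3"
    by (rule exists_nonneg_linear_combination)
  have wait: "\<And>x y s. 0 \<le> s \<Longrightarrow> (x, y + a * (x - 1) * s) \<in> ?O (x, y)"
    using orbit_pos_wait[OF assms(1)] assms(3,4) by simp
  let ?y2 = "y0 + d1 + a * (2 - 1) * s1"
  let ?y3 = "?y2 + d2 + a * (1/2 - 1) * s2"
  have "(2, ?y2) \<in> ?O (x0, y0)"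
    using orbit_pos_trans[OF d1 wait[OF s(1)]] .
  moreover have "(1/2, ?y3) \<in> ?O (2, ?y2)"
    using orbit_pos_trans[OF d2 wait[OF s(2)]] .
  moreover have "(x1, y1) \<in> ?O (1/2, ?y3)"
    using d3[of ?y3] s(3) by (simp add: algebra_simps)
  ultimately show "q \<in> ?O (x0, y0)"
    unfolding q by (blast intro: orbit_pos_trans)
qed

lemma cs_pre_G:
  assumes "\<alpha> \<noteq> 0" "a \<noteq> 0" "umin < 0" "0 < umax"
  shows "cs_pre umin umax a 0 \<alpha> \<beta> G"
  unfolding cs_pre_def
proof (intro conjI ballI subset_refl)
  fix p assume "p \<in> G"
  then obtain x y where p: "p = (x, y)" "0 < x"
    unfolding G_def by (cases p) auto
  have "admissible umin umax (\<lambda>_. 0)"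
    using assms(3,4) by (intro admissible_const) simp
  moreover have "\<forall>t\<ge>0. const_control_flow a \<alpha> \<beta> 0 x y t \<in> G"
    using p(2) unfolding const_control_flow_zero G_def by simp
  ultimately show "\<exists>u \<gamma>. admissible umin umax u \<and> is_solution a 0 \<alpha> \<beta> p u \<gamma> \<and> (\<forall>t\<ge>0. \<gamma> t \<in> G)"
    unfolding p(1) using is_solution_const_control[OF assms(1)] by blast
  show "G \<subseteq> closure (orbit_pos umin umax a 0 \<alpha> \<beta> p) \<inter> G"
    using G_subset_orbit_pos[OF assms p(2)] closure_subset unfolding p(1) by blast
qed

lemma control_set_iff_eq:
  assumes "cs_pre umin umax a b \<alpha> \<beta> G"
  shows "control_set umin umax a b \<alpha> \<beta> C \<longleftrightarrow> C = G"
  using assms unfolding control_set_def cs_pre_def by blast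

theorem mainTheorem7:
  fixes umin umax a b \<alpha> \<beta> :: real
  assumes "umin < 0" and "0 < umax"
    and "(a, b) \<noteq> (0, 0)" and "(\<alpha>, \<beta>) \<noteq> (0, 0)"
    and "b = 0" and "\<alpha> \<noteq> 0" and "a \<noteq> 0"
  shows "\<forall>C. control_set umin umax a b \<alpha> \<beta> C \<longleftrightarrow> C = G"
  using control_set_iff_eq cs_pre_G[OF assms(6,7,1,2)] assms(5) by blast

end
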